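(* Let $1<p<\infty$, let $u$ be a weight on $\mathbb R$ and let $w\in B_{p,\infty}$ be a weight on $(0,\infty)$. Then, with constants independent of $E$, for every measurable set $E\subset\mathbb R$, $$\|\chi_E\|_{(\Lambda^{p,\infty}_u(w))'}\approx\frac{u(E)}{W^{1/p}(u(E))}.$$
   Context: A weight $u$ on $\mathbb R$ is locally integrable with $u>0$ a.e.; $u(E)=\int_Eu$. A weight $w$ on $(0,\infty)$ is nonnegative locally integrable, $W(t)=\int_0^tw$. $f^*_u(t)=\inf\{y>0:u(\{|f|>y\})\le t\}$; $\|f\|_{\Lambda^{p,\infty}_u(w)}=\sup_{t>0}f^*_u(t)W(t)^{1/p}$. The associate space $(\Lambda^{p,\infty}_u(w))'$ consists of measurable $g$ with $\|g\|_{(\Lambda^{p,\infty}_u(w))'}=\sup\left\{\left|\int_{\mathbb R}fgu\right|/\|f\|_{\Lambda^{p,\infty}_u(w)}: f\in\Lambda^{p,\infty}_u(w)\right\}<\infty$. $w\in B_{p,\infty}$ means that the Hardy operator $Pf(t)=\frac1t\int_0^tf(s)\,ds$ satisfies $\sup_{\lambda>0}\lambda\left(\int_{\{Pf>\lambda\}}w\right)^{1/p}\le C\left(\int_0^\infty f^pw\right)^{1/p}$ for all nonnegative decreasing $f$ on $(0,\infty)$. $A\approx B$ means $C^{-1}B\le A\le CB$. *)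

theory Defs
  imports "HOL-Analysis.Analysis"
begin

definition enn_powr :: "ennreal \<Rightarrow> real \<Rightarrow> ennreal" where
  "enn_powr x a = (if x = top then top else ennreal (enn2real x powr a))"

definition weight_R :: "(real \<Rightarrow> real) \<Rightarrow> bool" where
  "weight_R u \<longleftrightarrow> u \<in> borel_measurable lebesgue
     \<and> (\<forall>K. compact K \<longrightarrow> set_integrable lebesgue K u)
     \<and> (AE x in lebesgue. 0 < u x)"

definition weight_pos :: "(real \<Rightarrow> real) \<Rightarrow> bool" where
  "weight_pos w \<longleftrightarrow> (\<forall>t>0. 0 \<le> w t) \<and> (\<forall>t>0. set_integrable lebesgue {0<..t} w)"

definition umeas :: "(real \<Rightarrow> real) \<Rightarrow> real set \<Rightarrow> ennreal" where
  "umeas u E = (\<integral>\<^sup>+ x\<in>E. ennreal (u x) \<partial>lebesgue)"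

definition Wfun :: "(real \<Rightarrow> real) \<Rightarrow> real \<Rightarrow> real" where
  "Wfun w t = (LINT s:{0<..t}|lebesgue. w s)"

definition rearr :: "(real \<Rightarrow> real) \<Rightarrow> (real \<Rightarrow> real) \<Rightarrow> real \<Rightarrow> ennreal" where
  "rearr u f t = Inf (ennreal ` {y::real. y > 0 \<and> umeas u {x. \<bar>f x\<bar> > y} \<le> ennreal t})"

definition lorentz_norm :: "real \<Rightarrow> (real \<Rightarrow> real) \<Rightarrow> (real \<Rightarrow> real) \<Rightarrow> (real \<Rightarrow> real) \<Rightarrow> ennreal" where
  "lorentz_norm p u w f = (SUP t\<in>{0<..}. rearr u f t * ennreal (Wfun w t powr (1/p)))"

definition in_lorentz :: "real \<Rightarrow> (real \<Rightarrow> real) \<Rightarrow> (real \<Rightarrow> real) \<Rightarrow> (real \<Rightarrow> real) \<Rightarrow> bool" where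
  "in_lorentz p u w f \<longleftrightarrow> f \<in> borel_measurable lebesgue \<and> lorentz_norm p u w f < top"

definition assoc_norm :: "real \<Rightarrow> (real \<Rightarrow> real) \<Rightarrow> (real \<Rightarrow> real) \<Rightarrow> (real \<Rightarrow> real) \<Rightarrow> ennreal" where
  "assoc_norm p u w g = (SUP f\<in>{f. in_lorentz p u w f \<and> lorentz_norm p u w f \<noteq> 0}.
      (if integrable lebesgue (\<lambda>x. f x * g x * u x)
       then ennreal \<bar>\<integral>x. f x * g x * u x \<partial>lebesgue\<bar> / lorentz_norm p u w f
       else top))"

definition hardyP :: "(real \<Rightarrow> real) \<Rightarrow> real \<Rightarrow> ennreal" where
  "hardyP f t = ennreal (1 / t) * (\<integral>\<^sup>+ s\<in>{0<..t}. ennreal (f s) \<partial>lebesgue)"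

definition B_p_infty :: "real \<Rightarrow> (real \<Rightarrow> real) \<Rightarrow> bool" where
  "B_p_infty p w \<longleftrightarrow> (\<exists>C. \<forall>f. (\<forall>t>0. 0 \<le> f t) \<and> antimono_on {0<..} f \<longrightarrow>
      (\<forall>lam>0. ennreal lam * enn_powr (\<integral>\<^sup>+ t\<in>{t. t > 0 \<and> hardyP f t > ennreal lam}. ennreal (w t) \<partial>lebesgue) (1/p)
        \<le> ennreal C * enn_powr (\<integral>\<^sup>+ t\<in>{0<..}. ennreal (f t powr p * w t) \<partial>lebesgue) (1/p)))"

end

theory Submission
  imports Defs
begin

text \<open>
  Testing the weak-type Hardy inequality that defines B_{p,oo} on the normalised indicators
  chi_(0,s] / s shows that W(t) / t^p is quasi-decreasing, and testing it on the dyadic sums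
  sum_{j<=m} chi_(0,2^j s] / (2^j s) shows that, for m large, W(t) / t^p at least halves
  between s and 2^m s. Equivalently, psi(t) = t / W(t)^(1/p) grows geometrically along
  t, 2^m t, 4^m t, ...

  The lower bound comes from testing the associate norm on chi_E, whose Lorentz norm is at
  most W(u(E))^(1/p). For the upper bound, a Lorentz norm at most N gives
  u({|f| > 2N / W(t)^(1/p)}) <= t; slicing |f| at these levels for t = u(E) / 2^(mk) bounds
  the integral of |f| u over E by a geometric series summing to a multiple of N psi(u(E)).
  If W vanishes somewhere, quasi-monotonicity forces W = 0 and both sides vanish.
\<close>

lemma
  assumes "weight_pos w" "0 < t"
  shows nn_integral_weight_Ioc: "(\<integral>\<^sup>+x\<in>{0<..t}. ennreal (w x) \<partial>lebesgue) = ennreal (Wfun w t)"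
    and Wfun_nonneg: "0 \<le> Wfun w t"
proof -
  have int: "integrable lebesgue (\<lambda>x. indicator {0<..t} x * w x)"
    using assms unfolding weight_pos_def set_integrable_def by auto
  have nonneg: "AE x in lebesgue. 0 \<le> indicator {0<..t} x * w x"
    using assms unfolding weight_pos_def by (auto simp: indicator_def)
  have "(\<integral>\<^sup>+x\<in>{0<..t}. ennreal (w x) \<partial>lebesgue) = (\<integral>\<^sup>+x. ennreal (indicator {0<..t} x * w x) \<partial>lebesgue)"
    by (intro nn_integral_cong) (auto simp: indicator_def)
  also have "\<dots> = ennreal (Wfun w t)"
    unfolding nn_integral_eq_integral[OF int nonneg] Wfun_def set_lebesgue_integral_def by simp
  finally show "(\<integral>\<^sup>+x\<in>{0<..t}. ennreal (w x) \<partial>lebesgue) = ennreal (Wfun w t)" .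
  show "0 \<le> Wfun w t"
    unfolding Wfun_def set_lebesgue_integral_def using integral_nonneg_AE[OF nonneg] by simp
qed

lemma Wfun_mono:
  assumes "weight_pos w" "0 < a" "a \<le> b"
  shows "Wfun w a \<le> Wfun w b"
proof -
  have "ennreal (Wfun w a) \<le> ennreal (Wfun w b)"
    using assms by (auto simp: nn_integral_weight_Ioc[symmetric] indicator_def intro!: nn_integral_mono)
  then show ?thesis
    using Wfun_nonneg[OF assms(1), of b] assms by simp
qed

lemma weight_pos_Ioc_measurable:
  assumes "weight_pos w" "0 < t"
  shows "(\<lambda>x. ennreal (w x) * indicator {0<..t} x) \<in> borel_measurable lebesgue"
proof -
  have "integrable lebesgue (\<lambda>x. indicator {0<..t} x * w x)"
    using assms unfolding weight_pos_def set_integrable_def by auto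
  then have "(\<lambda>x. ennreal (indicator {0<..t} x * w x)) \<in> borel_measurable lebesgue"
    by measurable
  moreover have "(\<lambda>x. ennreal (indicator {0<..t} x * w x)) = (\<lambda>x. ennreal (w x) * indicator {0<..t} x)"
    by (auto simp: indicator_def)
  ultimately show ?thesis
    by simp
qed

lemma umeas_mono: "A \<subseteq> B \<Longrightarrow> umeas u A \<le> umeas u B"
  unfolding umeas_def by (intro nn_integral_mono) (auto simp: indicator_def)

lemma umeas_empty [simp]: "umeas u {} = 0"
  by (simp add: umeas_def)

lemma enn_powr_ennreal: "0 \<le> x \<Longrightarrow> enn_powr (ennreal x) a = ennreal (x powr a)"
  unfolding enn_powr_def by simp

lemma enn_powr_mono: "x \<le> y \<Longrightarrow> 0 < a \<Longrightarrow> enn_powr x a \<le> enn_powr y a"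
  by (cases x; cases y) (auto simp: enn_powr_ennreal enn_powr_def top_unique intro!: powr_mono2)

lemma rearr_indicator:
  assumes "0 < t"
  shows "rearr u (indicator E) t = (if umeas u E \<le> ennreal t then 0 else 1)"
proof (cases "umeas u E \<le> ennreal t")
  case True
  have small: "rearr u (indicator E) t \<le> ennreal e" if "0 < e" for e
  proof -
    have "{x. e < \<bar>indicator E x :: real\<bar>} \<subseteq> E"
      using that by (auto simp: indicator_def split: if_splits)
    then have "umeas u {x. e < \<bar>indicator E x :: real\<bar>} \<le> ennreal t"
      using True umeas_mono order_trans by blast
    with that show ?thesis
      unfolding rearr_def by (intro Inf_lower imageI) simp
  qed
  have "rearr u (indicator E) t \<le> 0"
    by (rule ennreal_le_epsilon) (simp add: small)
  with True show ?thesis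
    by simp
next
  case False
  have "rearr u (indicator E) t \<le> ennreal 1"
    unfolding rearr_def by (rule Inf_lower) (auto simp: indicator_def)
  moreover have "1 \<le> rearr u (indicator E) t"
    unfolding rearr_def
  proof (rule Inf_greatest, clarify)
    fix y :: real
    assume "0 < y" and admissible: "umeas u {x. y < \<bar>indicator E x :: real\<bar>} \<le> ennreal t"
    show "1 \<le> ennreal y"
    proof (rule ccontr)
      assume "\<not> 1 \<le> ennreal y"
      then have "{x. y < \<bar>indicator E x :: real\<bar>} = E"
        using \<open>0 < y\<close> by (auto simp: indicator_def not_le)
      with admissible False show False
        by simp
    qed
  qed
  ultimately show ?thesis
    using False by simp
qed

lemma lorentz_norm_indicator_le:
  assumes "weight_pos w" "0 < p" "umeas u E = ennreal r"
  shows "lorentz_norm p u w (indicator E) \<le> ennreal (Wfun w r powr (1/p))"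
  unfolding lorentz_norm_def
proof (intro SUP_least)
  fix t :: real assume t: "t \<in> {0<..}"
  show "rearr u (indicator E) t * ennreal (Wfun w t powr (1/p)) \<le> ennreal (Wfun w r powr (1/p))"
  proof (cases "r \<le> t")
    case False
    then have "Wfun w t powr (1/p) \<le> Wfun w r powr (1/p)"
      using t assms by (intro powr_mono2 Wfun_mono Wfun_nonneg) auto
    then show ?thesis
      using t by (simp add: rearr_indicator ennreal_leI)
  qed (use t assms in \<open>simp add: rearr_indicator\<close>)
qed

lemma lorentz_norm_indicator_ge:
  assumes "0 < t" "ennreal t < umeas u E"
  shows "ennreal (Wfun w t powr (1/p)) \<le> lorentz_norm p u w (indicator E)"
proof -
  have "rearr u (indicator E) t = 1"
    using assms by (simp add: rearr_indicator)
  then have "ennreal (Wfun w t powr (1/p)) = rearr u (indicator E) t * ennreal (Wfun w t powr (1/p))"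
    by simp
  also have "\<dots> \<le> lorentz_norm p u w (indicator E)"
    unfolding lorentz_norm_def using assms(1) by (intro SUP_upper) simp
  finally show ?thesis .
qed

text \<open>The factor 2 leaves room for a level strictly above the rearrangement.\<close>
lemma umeas_level_set_le:
  assumes norm: "lorentz_norm p u w f \<le> ennreal N"
    and "0 < N" "0 < t" "0 < Wfun w t"
  shows "umeas u {x. 2 * N / Wfun w t powr (1/p) < \<bar>f x\<bar>} \<le> ennreal t"
proof -
  define a where "a = Wfun w t powr (1/p)"
  have a: "0 < a"
    unfolding a_def using assms by simp
  have "rearr u f t * ennreal a \<le> ennreal N"
    using norm \<open>0 < t\<close> unfolding lorentz_norm_def a_def
    by (meson SUP_upper greaterThan_iff order_trans)
  have "rearr u f t < ennreal (2 * N / a)"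
  proof (rule ccontr)
    assume "\<not> ?thesis"
    then have "ennreal (2 * N / a) * ennreal a \<le> rearr u f t * ennreal a"
      by (intro mult_right_mono) auto
    also have "\<dots> \<le> ennreal N"
      by fact
    finally show False
      using a \<open>0 < N\<close> by (simp add: ennreal_mult[symmetric] ennreal_le_iff)
  qed
  then obtain y where y: "0 < y" "umeas u {x. y < \<bar>f x\<bar>} \<le> ennreal t" "y < 2 * N / a"
    unfolding rearr_def by (auto simp: Inf_less_iff ennreal_less_iff)
  then have "umeas u {x. 2 * N / a < \<bar>f x\<bar>} \<le> umeas u {x. y < \<bar>f x\<bar>}"
    by (intro umeas_mono) auto
  with y show ?thesis
    unfolding a_def by simp
qed

lemma ennreal_le_layers:
  fixes Y :: "nat \<Rightarrow> real"
  shows "ennreal v \<le> ennreal (Y 0) + (\<Sum>k. ennreal (Y (Suc k)) * of_bool (Y k < v))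
                        + \<infinity> * of_bool (\<forall>k. Y k < v)"
proof (cases "\<forall>k. Y k < v")
  case False
  then obtain n where "v \<le> Y n"
    by (auto simp: not_less)
  define j where "j = (LEAST j. v \<le> Y j)"
  have "v \<le> Y j"
    unfolding j_def by (rule LeastI) fact
  show ?thesis
  proof (cases j)
    case 0
    with \<open>v \<le> Y j\<close> show ?thesis
      by (intro add_increasing2 order_trans[OF _ add_increasing2] ennreal_leI) auto
  next
    case (Suc k)
    then have "Y k < v"
      unfolding j_def by (metis lessI not_less_Least not_le)
    have term_le_suminf: "g k \<le> suminf g" for g :: "nat \<Rightarrow> ennreal"
      using sum_le_suminf[OF summableI, of "{k}" g] by simp
    from \<open>Y k < v\<close> \<open>v \<le> Y j\<close> Suc have "ennreal v \<le> ennreal (Y (Suc k)) * of_bool (Y k < v)"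
      by (simp add: ennreal_leI)
    also have "\<dots> \<le> (\<Sum>k. ennreal (Y (Suc k)) * of_bool (Y k < v))"
      by (rule term_le_suminf)
    finally show ?thesis
      by (simp add: add_increasing add_increasing2)
  qed
qed simp

lemma nn_integral_le_layers:
  fixes Y :: "nat \<Rightarrow> real"
  assumes [measurable]: "f \<in> borel_measurable lebesgue" "u \<in> borel_measurable lebesgue" "E \<in> sets lebesgue"
  shows "(\<integral>\<^sup>+x\<in>E. ennreal \<bar>f x\<bar> * ennreal (u x) \<partial>lebesgue)
      \<le> ennreal (Y 0) * umeas u E + (\<Sum>k. ennreal (Y (Suc k)) * umeas u {x. Y k < \<bar>f x\<bar>})
        + \<infinity> * umeas u {x. \<forall>k. Y k < \<bar>f x\<bar>}"
proof -
  have umeas_eq: "umeas u A = (\<integral>\<^sup>+x. ennreal (u x) * indicator A x \<partial>lebesgue)" for A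
    by (simp add: umeas_def)
  have "(\<integral>\<^sup>+x\<in>E. ennreal \<bar>f x\<bar> * ennreal (u x) \<partial>lebesgue)
      \<le> (\<integral>\<^sup>+x. ennreal (Y 0) * (ennreal (u x) * indicator E x)
            + (\<Sum>k. ennreal (Y (Suc k)) * (ennreal (u x) * indicator {x. Y k < \<bar>f x\<bar>} x))
            + \<infinity> * (ennreal (u x) * indicator {x. \<forall>k. Y k < \<bar>f x\<bar>} x) \<partial>lebesgue)"
  proof (intro nn_integral_mono)
    fix x
    let ?c = "ennreal (u x) * indicator E x"
    have "ennreal \<bar>f x\<bar> * ennreal (u x) * indicator E x
        \<le> (ennreal (Y 0) + (\<Sum>k. ennreal (Y (Suc k)) * of_bool (Y k < \<bar>f x\<bar>))
            + \<infinity> * of_bool (\<forall>k. Y k < \<bar>f x\<bar>)) * ?c"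
      unfolding mult.assoc by (intro mult_right_mono ennreal_le_layers) simp
    also have "\<dots> \<le> ennreal (Y 0) * ?c
            + (\<Sum>k. ennreal (Y (Suc k)) * (ennreal (u x) * indicator {x. Y k < \<bar>f x\<bar>} x))
            + \<infinity> * (ennreal (u x) * indicator {x. \<forall>k. Y k < \<bar>f x\<bar>} x)"
      unfolding distrib_right ennreal_suminf_multc[symmetric]
      by (intro add_mono suminf_le summableI) (auto simp: indicator_def)
    finally show "ennreal \<bar>f x\<bar> * ennreal (u x) * indicator E x \<le> \<dots>" .
  qed
  also have "\<dots> = ennreal (Y 0) * umeas u E + (\<Sum>k. ennreal (Y (Suc k)) * umeas u {x. Y k < \<bar>f x\<bar>})
        + \<infinity> * umeas u {x. \<forall>k. Y k < \<bar>f x\<bar>}"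
    unfolding umeas_eq
    by (subst nn_integral_add, measurable, subst nn_integral_add, measurable,
        simp add: nn_integral_suminf nn_integral_cmult)
  finally show ?thesis .
qed

lemma nn_integral_layer_bound:
  fixes Y t :: "nat \<Rightarrow> real"
  assumes "f \<in> borel_measurable lebesgue" "u \<in> borel_measurable lebesgue" "E \<in> sets lebesgue"
    and levels: "\<And>k. umeas u {x. Y k < \<bar>f x\<bar>} \<le> ennreal (t k)"
    and "t \<longlonglongrightarrow> 0" and Y_nonneg: "\<And>k. 0 \<le> Y k"
  shows "(\<integral>\<^sup>+x\<in>E. ennreal \<bar>f x\<bar> * ennreal (u x) \<partial>lebesgue)
      \<le> ennreal (Y 0) * umeas u E + (\<Sum>k. ennreal (Y (Suc k) * t k))"
proof -
  have null: "umeas u {x. \<forall>k. Y k < \<bar>f x\<bar>} \<le> ennreal 0"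
  proof (rule LIMSEQ_le_const)
    show "(\<lambda>k. ennreal (t k)) \<longlonglongrightarrow> ennreal 0"
      using \<open>t \<longlonglongrightarrow> 0\<close> by (rule tendsto_ennrealI)
    have "umeas u {x. \<forall>k. Y k < \<bar>f x\<bar>} \<le> ennreal (t k)" for k
      by (rule order_trans[OF umeas_mono levels]) auto
    then show "\<exists>N. \<forall>k\<ge>N. umeas u {x. \<forall>k. Y k < \<bar>f x\<bar>} \<le> ennreal (t k)"
      by simp
  qed
  have "(\<integral>\<^sup>+x\<in>E. ennreal \<bar>f x\<bar> * ennreal (u x) \<partial>lebesgue)
      \<le> ennreal (Y 0) * umeas u E + (\<Sum>k. ennreal (Y (Suc k)) * umeas u {x. Y k < \<bar>f x\<bar>})
        + \<infinity> * umeas u {x. \<forall>k. Y k < \<bar>f x\<bar>}"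
    using assms(1-3) by (rule nn_integral_le_layers)
  also have "\<dots> \<le> ennreal (Y 0) * umeas u E + (\<Sum>k. ennreal (Y (Suc k) * t k)) + \<infinity> * 0"
    using levels Y_nonneg null
    by (intro add_mono order_refl suminf_le summableI mult_left_mono)
      (auto simp: ennreal_mult' intro: mult_left_mono)
  finally show ?thesis
    by simp
qed

lemma exists_nat_powr_gt:
  assumes "0 < q"
  shows "\<exists>m::nat. 1 \<le> m \<and> c < (real m + 1) powr q"
proof -
  define m where "m = nat \<lceil>max c 1 powr (1/q)\<rceil> + 1"
  have "max c 1 powr (1/q) < real m + 1"
    unfolding m_def by linarith
  then have "(max c 1 powr (1/q)) powr q < (real m + 1) powr q"
    using assms by (intro powr_less_mono2) auto
  moreover have "(max c 1 powr (1/q)) powr q = max c 1"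
    using assms by (simp add: powr_powr)
  ultimately show ?thesis
    by (intro exI[of _ m]) (auto simp: m_def)
qed

lemma sums_geometric_tail:
  fixes c \<beta> :: real assumes "1 < \<beta>"
  shows "(\<lambda>k. c * (1/\<beta>)^(Suc k)) sums (c / (\<beta> - 1))"
proof -
  have "(\<lambda>k. c / \<beta> * (1/\<beta>)^k) sums (c / \<beta> * (1 / (1 - 1/\<beta>)))"
    using assms by (intro sums_mult geometric_sums) simp
  moreover have "c / \<beta> * (1 / (1 - 1/\<beta>)) = c / (\<beta> - 1)"
    using assms by (simp add: field_simps)
  moreover have "(\<lambda>k. c / \<beta> * (1/\<beta>)^k) = (\<lambda>k. c * (1/\<beta>)^(Suc k))"
    by (simp add: fun_eq_iff divide_inverse mult_ac)
  ultimately show ?thesis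
    by metis
qed

definition dyadic_test :: "real \<Rightarrow> nat \<Rightarrow> real \<Rightarrow> real" where
  "dyadic_test s m x = (\<Sum>j\<le>m. indicator {0<..2^j * s} x / (2^j * s))"

lemma dyadic_test_nonneg: "0 < s \<Longrightarrow> 0 \<le> dyadic_test s m x"
  unfolding dyadic_test_def by (intro sum_nonneg) auto

lemma dyadic_test_antimono: "0 < s \<Longrightarrow> antimono_on {0<..} (dyadic_test s m)"
  unfolding dyadic_test_def monotone_on_def
  by (auto intro!: sum_mono divide_right_mono simp: indicator_def)

lemma hardyP_dyadic_test:
  assumes "0 < s" "0 < t"
  shows "hardyP (dyadic_test s m) t = ennreal (\<Sum>j\<le>m. 1 / max t (2^j * s))"
proof -
  have "(\<integral>\<^sup>+x\<in>{0<..t}. ennreal (dyadic_test s m x) \<partial>lebesgue)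
      = (\<integral>\<^sup>+x. (\<Sum>j\<le>m. ennreal (1 / (2^j * s)) * indicator {0<..min t (2^j * s)} x) \<partial>lebesgue)"
  proof (intro nn_integral_cong)
    fix x
    show "ennreal (dyadic_test s m x) * indicator {0<..t} x
        = (\<Sum>j\<le>m. ennreal (1 / (2^j * s)) * indicator {0<..min t (2^j * s)} x)"
    proof (cases "x \<in> {0<..t}")
      case True
      then have "dyadic_test s m x = (\<Sum>j\<le>m. 1 / (2^j * s) * indicator {0<..min t (2^j * s)} x)"
        unfolding dyadic_test_def by (intro sum.cong) (auto simp: indicator_def)
      then have "ennreal (dyadic_test s m x)
          = (\<Sum>j\<le>m. ennreal (1 / (2^j * s) * indicator {0<..min t (2^j * s)} x))"
        using \<open>0 < s\<close> by (subst sum_ennreal) auto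
      also have "\<dots> = (\<Sum>j\<le>m. ennreal (1 / (2^j * s)) * indicator {0<..min t (2^j * s)} x)"
        by (intro sum.cong refl) (simp add: indicator_def)
      finally show ?thesis
        using True by simp
    qed (auto simp: indicator_def)
  qed
  also have "\<dots> = (\<Sum>j\<le>m. ennreal (1 / (2^j * s)) * ennreal (min t (2^j * s)))"
    using assms
    by (subst nn_integral_sum)
      (measurable, auto simp: nn_integral_cmult_indicator emeasure_completion
        id_borel_measurable_lebesgue[unfolded id_def])
  also have "\<dots> = ennreal (\<Sum>j\<le>m. min t (2^j * s) / (2^j * s))"
    using assms by (auto simp: ennreal_mult[symmetric] intro!: sum_ennreal)
  moreover have "1 / t * (\<Sum>j\<le>m. min t (2^j * s) / (2^j * s)) = (\<Sum>j\<le>m. 1 / max t (2^j * s))"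
    unfolding sum_distrib_left using assms by (intro sum.cong refl) (auto simp: min_def max_def)
  ultimately show ?thesis
    using assms unfolding hardyP_def by (simp add: ennreal_mult[symmetric] sum_nonneg)
qed

lemma dyadic_test_eq_0:
  assumes "0 < s" "2^m * s < x"
  shows "dyadic_test s m x = 0"
  unfolding dyadic_test_def
proof (intro sum.neutral ballI)
  fix j assume "j \<in> {..m}"
  then have "(2::real)^j * s \<le> 2^m * s"
    using assms by (intro mult_right_mono power_increasing) auto
  then have "\<not> x \<le> 2^j * s"
    using assms by linarith
  then show "indicator {0<..2^j * s} x / (2^j * s) = 0"
    by (simp add: indicator_def)
qed

lemma dyadic_test_le:
  assumes "0 < s" and below: "\<And>j. j < k \<Longrightarrow> 2^j * s < x"
  shows "dyadic_test s m x \<le> 2 / (2^k * s)"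
proof -
  have "dyadic_test s m x = (\<Sum>j\<in>{k..m}. indicator {0<..2^j * s} x / (2^j * s))"
    unfolding dyadic_test_def
    by (rule sum.mono_neutral_right) (auto simp: indicator_def not_le dest!: below)
  also have "\<dots> \<le> (\<Sum>j\<in>{k..m}. (1/2)^j / s)"
    using \<open>0 < s\<close> by (intro sum_mono) (auto simp: indicator_def power_one_over)
  also have "\<dots> = (\<Sum>j\<in>{k..m}. (1/2::real)^j) / s"
    by (simp add: sum_divide_distrib)
  also have "(\<Sum>j\<in>{k..m}. (1/2::real)^j) \<le> 2 * (1/2)^k"
    by (simp add: sum_gp)
  finally show ?thesis
    using \<open>0 < s\<close> by (simp add: divide_right_mono power_one_over)
qed

lemma dyadic_test_powr_le:
  assumes "0 < s" "0 < x" "0 < p"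
  shows "dyadic_test s m x powr p \<le> (\<Sum>k\<le>m. 2 powr p * (2^k * s) powr -p * indicator {0<..2^k * s} x)"
proof (cases "x \<le> 2^m * s")
  case True
  define k where "k = (LEAST k. x \<le> 2^k * s)"
  have x_le: "x \<le> 2^k * s"
    unfolding k_def by (rule LeastI) (rule True)
  have "k \<le> m"
    unfolding k_def by (rule Least_le) (rule True)
  have "dyadic_test s m x \<le> 2 / (2^k * s)"
    using \<open>0 < s\<close> by (rule dyadic_test_le) (use not_less_Least k_def in fastforce)
  then have "dyadic_test s m x powr p \<le> (2 / (2^k * s)) powr p"
    using assms dyadic_test_nonneg by (intro powr_mono2) auto
  also have "\<dots> = 2 powr p * (2^k * s) powr -p * indicator {0<..2^k * s} x"
    using assms x_le by (simp add: powr_divide powr_minus_divide)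
  also have "\<dots> \<le> (\<Sum>k\<le>m. 2 powr p * (2^k * s) powr -p * indicator {0<..2^k * s} x)"
    using \<open>k \<le> m\<close> by (intro member_le_sum) auto
  finally show ?thesis .
qed (use assms dyadic_test_eq_0 in \<open>auto intro!: sum_nonneg\<close>)

lemma nn_integral_dyadic_test_powr_le:
  assumes w: "weight_pos w" and "0 < s" "0 < p"
  shows "(\<integral>\<^sup>+t\<in>{0<..}. ennreal (dyadic_test s m t powr p * w t) \<partial>lebesgue)
      \<le> ennreal (2 powr p * (\<Sum>k\<le>m. Wfun w (2^k * s) * (2^k * s) powr -p))"
proof -
  define c where "c k = 2 powr p * (2^k * s) powr -p" for k
  have "(\<integral>\<^sup>+t\<in>{0<..}. ennreal (dyadic_test s m t powr p * w t) \<partial>lebesgue)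
      \<le> (\<integral>\<^sup>+t. (\<Sum>k\<le>m. ennreal (c k) * (ennreal (w t) * indicator {0<..2^k * s} t)) \<partial>lebesgue)"
  proof (intro nn_integral_mono)
    fix t
    show "ennreal (dyadic_test s m t powr p * w t) * indicator {0<..} t
        \<le> (\<Sum>k\<le>m. ennreal (c k) * (ennreal (w t) * indicator {0<..2^k * s} t))"
    proof (cases "0 < t")
      case True
      have "0 \<le> w t"
        using w True unfolding weight_pos_def by auto
      then have "dyadic_test s m t powr p * w t \<le> (\<Sum>k\<le>m. c k * indicator {0<..2^k * s} t) * w t"
        unfolding c_def using assms True by (intro mult_right_mono dyadic_test_powr_le)
      also have "\<dots> = (\<Sum>k\<le>m. c k * (w t * indicator {0<..2^k * s} t))"
        unfolding sum_distrib_right by (intro sum.cong refl) (simp only: mult_ac)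
      finally have "ennreal (dyadic_test s m t powr p * w t)
          \<le> ennreal (\<Sum>k\<le>m. c k * (w t * indicator {0<..2^k * s} t))"
        by (rule ennreal_leI)
      also have "\<dots> = (\<Sum>k\<le>m. ennreal (c k) * (ennreal (w t) * indicator {0<..2^k * s} t))"
        using \<open>0 \<le> w t\<close> unfolding c_def
        by (subst sum_ennreal[symmetric]) (auto intro!: sum.cong simp: ennreal_mult indicator_def)
      finally show ?thesis
        using True by simp
    qed simp
  qed
  also have "\<dots> = (\<Sum>k\<le>m. ennreal (c k) * ennreal (Wfun w (2^k * s)))"
  proof (subst nn_integral_sum)
    fix k
    show "(\<lambda>t. ennreal (c k) * (ennreal (w t) * indicator {0<..2^k * s} t)) \<in> borel_measurable lebesgue"
      using assms by (intro borel_measurable_times_ennreal borel_measurable_const weight_pos_Ioc_measurable) auto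
  qed (use assms in \<open>simp_all add: nn_integral_cmult weight_pos_Ioc_measurable nn_integral_weight_Ioc[symmetric]\<close>)
  also have "\<dots> = ennreal (2 powr p * (\<Sum>k\<le>m. Wfun w (2^k * s) * (2^k * s) powr -p))"
    using assms Wfun_nonneg[OF w]
    by (simp add: c_def sum_ennreal ennreal_mult[symmetric] sum_distrib_left mult_ac)
  finally show ?thesis .
qed

definition assoc_fundamental :: "real \<Rightarrow> (real \<Rightarrow> real) \<Rightarrow> real \<Rightarrow> real" where
  "assoc_fundamental p w t = t / Wfun w t powr (1/p)"

definition dilation_index :: "real \<Rightarrow> (real \<Rightarrow> real) \<Rightarrow> nat \<Rightarrow> bool" where
  "dilation_index p w m \<longleftrightarrow> 1 \<le> m \<and>
     (\<forall>s>0. 2 powr (1/p) * assoc_fundamental p w s \<le> assoc_fundamental p w (2^m * s))"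

text \<open>2 from the bottom layer, 2^(m+1) / (2^(1/p) - 1) from the geometric tail of the layers.\<close>
definition layer_const :: "real \<Rightarrow> nat \<Rightarrow> real" where
  "layer_const p m = 2 * (1 + 2^m / (2 powr (1/p) - 1))"

lemma one_le_layer_const:
  assumes "0 < p"
  shows "1 \<le> layer_const p m"
proof -
  have "1 < (2::real) powr (1/p)"
    using assms by simp
  then have "0 \<le> 2^m / (2 powr (1/p) - 1)"
    by simp
  then show ?thesis
    unfolding layer_const_def by (simp add: distrib_left)
qed

lemma assoc_fundamental_dyadic_le:
  assumes m: "dilation_index p w m" and "0 < r"
  shows "assoc_fundamental p w (r / 2^(m * k)) \<le> assoc_fundamental p w r / (2 powr (1/p))^k"
proof (induction k)
  case (Suc k)
  define F where "F = assoc_fundamental p w"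
  define \<beta> :: real where "\<beta> = 2 powr (1/p)"
  have "0 < r / 2^(m * Suc k)"
    using \<open>0 < r\<close> by simp
  with m have "\<beta> * F (r / 2^(m * Suc k)) \<le> F (2^m * (r / 2^(m * Suc k)))"
    unfolding dilation_index_def F_def \<beta>_def by blast
  also have "2^m * (r / 2^(m * Suc k)) = r / 2^(m * k)"
    by (simp add: power_add field_simps)
  finally have "\<beta>^Suc k * F (r / 2^(m * Suc k)) \<le> \<beta>^k * F (r / 2^(m * k))"
    by (simp add: \<beta>_def mult.assoc mult_left_mono)
  also have "\<dots> \<le> F r"
    using Suc.IH by (simp add: F_def \<beta>_def pos_le_divide_eq mult.commute)
  finally show ?case
    by (simp add: F_def \<beta>_def pos_le_divide_eq mult.commute)
qed simp

lemma suminf_assoc_fundamental_dyadic_le: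
  assumes m: "dilation_index p w m" and "0 < p" "0 < r"
  shows "(\<Sum>k. ennreal (assoc_fundamental p w (r / 2^(m * Suc k))))
      \<le> ennreal (assoc_fundamental p w r / (2 powr (1/p) - 1))"
proof -
  define F where "F = assoc_fundamental p w"
  define \<beta> :: real where "\<beta> = 2 powr (1/p)"
  have "1 < \<beta>"
    unfolding \<beta>_def using \<open>0 < p\<close> by simp
  have "0 \<le> F r"
    unfolding F_def assoc_fundamental_def using \<open>0 < r\<close> by simp
  have "(\<Sum>k. ennreal (F (r / 2^(m * Suc k)))) \<le> (\<Sum>k. ennreal (F r * (1/\<beta>)^Suc k))"
  proof (intro suminf_le summableI ennreal_leI)
    fix k
    show "F (r / 2^(m * Suc k)) \<le> F r * (1/\<beta>)^Suc k"
      using assoc_fundamental_dyadic_le[OF m \<open>0 < r\<close>, of "Suc k"]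
      by (simp add: F_def \<beta>_def power_one_over)
  qed
  also have "\<dots> = ennreal (F r / (\<beta> - 1))"
    using sums_geometric_tail[OF \<open>1 < \<beta>\<close>, of "F r"] \<open>0 \<le> F r\<close> \<open>1 < \<beta>\<close>
    by (intro suminf_ennreal_eq) auto
  finally show ?thesis
    unfolding F_def \<beta>_def .
qed

lemma nn_integral_le_assoc_fundamental:
  assumes u: "weight_R u" and "0 < p" and Wpos: "\<forall>t>0. 0 < Wfun w t"
    and m: "dilation_index p w m"
    and E: "E \<in> sets lebesgue" "umeas u E = ennreal r" "0 < r"
    and f: "f \<in> borel_measurable lebesgue" "lorentz_norm p u w f \<le> ennreal N" "0 < N"
  shows "(\<integral>\<^sup>+x\<in>E. ennreal \<bar>f x\<bar> * ennreal (u x) \<partial>lebesgue)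
      \<le> ennreal (layer_const p m * N * assoc_fundamental p w r)"
proof -
  define F where "F = assoc_fundamental p w"
  define t where "t k = r / 2^(m * k)" for k
  define Y where "Y k = 2 * N / Wfun w (t k) powr (1/p)" for k
  have "1 < (2::real) powr (1/p)"
    using \<open>0 < p\<close> by simp
  have t_pos: "0 < t k" for k
    unfolding t_def using E by simp
  have "t \<longlonglongrightarrow> 0"
    using LIMSEQ_divide_realpow_zero[of "2^m" r] m
    unfolding t_def dilation_index_def by (simp add: power_mult one_less_power)
  have levels: "umeas u {x. Y k < \<bar>f x\<bar>} \<le> ennreal (t k)" for k
    unfolding Y_def using f t_pos Wpos by (intro umeas_level_set_le) auto
  have F_nonneg: "0 \<le> F (t k)" for k
    unfolding F_def assoc_fundamental_def using t_pos[of k] by simp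
  have "0 \<le> F r"
    unfolding F_def assoc_fundamental_def using E by simp
  have "Y (Suc k) * t k = 2^(m + 1) * N * F (t (Suc k))" for k
    unfolding Y_def F_def assoc_fundamental_def t_def by (simp add: power_add field_simps)
  then have "(\<Sum>k. ennreal (Y (Suc k) * t k)) = ennreal (2^(m + 1) * N) * (\<Sum>k. ennreal (F (t (Suc k))))"
    using \<open>0 < N\<close> F_nonneg by (simp add: ennreal_mult ennreal_suminf_cmult)
  also have "\<dots> \<le> ennreal (2^(m + 1) * N) * ennreal (F r / (2 powr (1/p) - 1))"
    unfolding F_def t_def using suminf_assoc_fundamental_dyadic_le[OF m \<open>0 < p\<close> \<open>0 < r\<close>]
    by (rule mult_left_mono) simp
  also have "\<dots> = ennreal (2^(m + 1) * N * (F r / (2 powr (1/p) - 1)))"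
    using \<open>0 < N\<close> by (intro ennreal_mult'[symmetric]) simp
  finally have tail: "(\<Sum>k. ennreal (Y (Suc k) * t k)) \<le> ennreal (2^(m + 1) * N * (F r / (2 powr (1/p) - 1)))" .
  have "(\<integral>\<^sup>+x\<in>E. ennreal \<bar>f x\<bar> * ennreal (u x) \<partial>lebesgue)
      \<le> ennreal (Y 0) * umeas u E + (\<Sum>k. ennreal (Y (Suc k) * t k))"
    using u f E levels \<open>t \<longlonglongrightarrow> 0\<close> \<open>0 < N\<close>
    by (intro nn_integral_layer_bound) (auto simp: weight_R_def Y_def)
  also have "\<dots> = ennreal (Y 0 * r) + (\<Sum>k. ennreal (Y (Suc k) * t k))"
    using E by (simp add: ennreal_mult'')
  also have "\<dots> \<le> ennreal (2 * N * F r) + ennreal (2^(m + 1) * N * (F r / (2 powr (1/p) - 1)))"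
    using tail by (intro add_mono) (simp_all add: Y_def t_def F_def assoc_fundamental_def)
  also have "\<dots> = ennreal (2 * N * F r + 2^(m + 1) * N * (F r / (2 powr (1/p) - 1)))"
    using \<open>0 < N\<close> \<open>1 < 2 powr (1/p)\<close> \<open>0 \<le> F r\<close> by (intro ennreal_plus[symmetric]) auto
  also have "2 * N * F r + 2^(m + 1) * N * (F r / (2 powr (1/p) - 1)) = layer_const p m * N * F r"
    unfolding layer_const_def using \<open>1 < 2 powr (1/p)\<close> by (simp add: field_simps)
  finally show ?thesis
    unfolding F_def .
qed

lemma assoc_norm_indicator_le:
  assumes u: "weight_R u" and "0 < p" and Wpos: "\<forall>t>0. 0 < Wfun w t"
    and m: "dilation_index p w m"
    and E: "E \<in> sets lebesgue" "umeas u E = ennreal r" "0 < r"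
  shows "assoc_norm p u w (indicator E) \<le> ennreal (layer_const p m * assoc_fundamental p w r)"
  unfolding assoc_norm_def
proof (intro SUP_least)
  define c where "c = layer_const p m * assoc_fundamental p w r"
  have "0 \<le> c"
    unfolding c_def assoc_fundamental_def using one_le_layer_const[OF \<open>0 < p\<close>, of m] E
    by (intro mult_nonneg_nonneg) auto
  fix f assume "f \<in> {f. in_lorentz p u w f \<and> lorentz_norm p u w f \<noteq> 0}"
  then obtain N where [measurable]: "f \<in> borel_measurable lebesgue"
    and N: "lorentz_norm p u w f = ennreal N" "0 < N"
    unfolding in_lorentz_def by (cases "lorentz_norm p u w f") (auto simp: ennreal_less_iff)
  have [measurable]: "u \<in> borel_measurable lebesgue" "E \<in> sets lebesgue"
    using u E unfolding weight_R_def by auto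
  have "(\<integral>\<^sup>+x. ennreal (norm (f x * indicator E x * u x)) \<partial>lebesgue)
      = (\<integral>\<^sup>+x\<in>E. ennreal \<bar>f x\<bar> * ennreal (u x) \<partial>lebesgue)"
    using u unfolding weight_R_def
    by (intro nn_integral_cong_AE) (auto elim!: eventually_mono simp: indicator_def abs_mult ennreal_mult)
  also have "\<dots> \<le> ennreal (c * N)"
    using nn_integral_le_assoc_fundamental[OF assms \<open>f \<in> borel_measurable lebesgue\<close> _ \<open>0 < N\<close>] N
    by (simp add: c_def mult_ac)
  finally have bound: "(\<integral>\<^sup>+x. ennreal (norm (f x * indicator E x * u x)) \<partial>lebesgue) \<le> ennreal (c * N)" .
  then have int: "integrable lebesgue (\<lambda>x. f x * indicator E x * u x)"
    by (intro integrableI_bounded) (auto simp: top.not_eq_extremum intro: le_less_trans)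
  then have "ennreal \<bar>\<integral>x. f x * indicator E x * u x \<partial>lebesgue\<bar> \<le> ennreal (c * N)"
    using integral_norm_bound_ennreal[OF int] bound by (simp add: order_trans)
  then have "\<bar>\<integral>x. f x * indicator E x * u x \<partial>lebesgue\<bar> / N \<le> c"
    using \<open>0 \<le> c\<close> \<open>0 < N\<close> by (simp add: ennreal_le_iff pos_divide_le_eq)
  then show "(if integrable lebesgue (\<lambda>x. f x * indicator E x * u x)
      then ennreal \<bar>\<integral>x. f x * indicator E x * u x \<partial>lebesgue\<bar> / lorentz_norm p u w f else top)
      \<le> ennreal c"
    using int N by (simp add: divide_ennreal ennreal_leI)
qed

lemma
  assumes "weight_R u" "E \<in> sets lebesgue" "umeas u E = ennreal r" "0 \<le> r"
  shows integrable_indicator_weight: "integrable lebesgue (\<lambda>x. indicator E x * indicator E x * u x)"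
    and integral_indicator_weight: "(\<integral>x. indicator E x * indicator E x * u x \<partial>lebesgue) = r"
proof -
  have [measurable]: "u \<in> borel_measurable lebesgue" "E \<in> sets lebesgue"
    using assms unfolding weight_R_def by auto
  have nonneg: "AE x in lebesgue. 0 \<le> indicator E x * indicator E x * u x"
    using assms unfolding weight_R_def by (auto elim!: eventually_mono)
  have nn: "(\<integral>\<^sup>+x. ennreal (indicator E x * indicator E x * u x) \<partial>lebesgue) = ennreal r"
    unfolding assms(3)[symmetric] umeas_def by (intro nn_integral_cong) (auto simp: indicator_def)
  show "integrable lebesgue (\<lambda>x. indicator E x * indicator E x * u x)"
    using nn by (intro integrableI_nn_integral_finite[OF _ nonneg]) auto
  show "(\<integral>x. indicator E x * indicator E x * u x \<partial>lebesgue) = r"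
    using integral_eq_nn_integral[OF _ nonneg] nn assms(4) by simp
qed

lemma assoc_norm_indicator_ge:
  assumes u: "weight_R u" and w: "weight_pos w" and "0 < p" and "0 < Wfun w (r/2)"
    and E: "E \<in> sets lebesgue" "umeas u E = ennreal r" "0 < r"
  shows "ennreal (assoc_fundamental p w r) \<le> assoc_norm p u w (indicator E)"
proof -
  have upper: "lorentz_norm p u w (indicator E) \<le> ennreal (Wfun w r powr (1/p))"
    using w \<open>0 < p\<close> E(2) by (rule lorentz_norm_indicator_le)
  moreover have lower: "ennreal (Wfun w (r/2) powr (1/p)) \<le> lorentz_norm p u w (indicator E)"
    using E by (intro lorentz_norm_indicator_ge) (auto simp: ennreal_less_iff)
  ultimately obtain n where n: "lorentz_norm p u w (indicator E) = ennreal n"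
      "n \<le> Wfun w r powr (1/p)" "Wfun w (r/2) powr (1/p) \<le> n"
    by (cases "lorentz_norm p u w (indicator E)") (auto simp: ennreal_le_iff top_unique)
  have "0 < Wfun w (r/2) powr (1/p)"
    using \<open>0 < Wfun w (r/2)\<close> by simp
  with n(3) have "0 < n"
    by linarith
  have "in_lorentz p u w (indicator E)"
    unfolding in_lorentz_def using E(1) n by simp
  have "ennreal (assoc_fundamental p w r) \<le> ennreal (r / n)"
    unfolding assoc_fundamental_def using E n \<open>0 < n\<close> by (intro ennreal_leI divide_left_mono mult_pos_pos) auto
  also have "\<dots> = ennreal \<bar>\<integral>x. indicator E x * indicator E x * u x \<partial>lebesgue\<bar> / lorentz_norm p u w (indicator E)"
    using integral_indicator_weight[OF u E(1,2)] E n \<open>0 < n\<close> by (simp add: divide_ennreal)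
  also have "\<dots> \<le> assoc_norm p u w (indicator E)"
    unfolding assoc_norm_def
    using integrable_indicator_weight[OF u E(1,2)] \<open>in_lorentz p u w (indicator E)\<close> E n \<open>0 < n\<close>
    by (intro SUP_upper2[where i = "indicator E"]) auto
  finally show ?thesis .
qed

text \<open>No function has nonzero quasi-norm, so the supremum is taken over the empty set.\<close>
lemma assoc_norm_eq_0:
  assumes "\<forall>t>0. Wfun w t = 0"
  shows "assoc_norm p u w g = 0"
proof -
  have "lorentz_norm p u w f = 0" for f
    unfolding lorentz_norm_def using assms by (simp add: SUP_constant)
  then show ?thesis
    unfolding assoc_norm_def by (simp add: bot_ennreal)
qed

lemma assoc_norm_indicator_approx:
  assumes u: "weight_R u" and w: "weight_pos w" and "0 < p" and Wpos: "\<forall>t>0. 0 < Wfun w t"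
    and m: "dilation_index p w m"
    and E: "E \<in> sets lebesgue" "0 < umeas u E" "umeas u E < \<infinity>"
  defines "r \<equiv> enn2real (umeas u E)"
  shows "assoc_norm p u w (indicator E) \<le> ennreal (layer_const p m * assoc_fundamental p w r)"
    and "ennreal (assoc_fundamental p w r) \<le> ennreal (layer_const p m) * assoc_norm p u w (indicator E)"
proof -
  have r: "umeas u E = ennreal r" "0 < r"
    using E unfolding r_def by (auto simp: enn2real_positive_iff)
  then show "assoc_norm p u w (indicator E) \<le> ennreal (layer_const p m * assoc_fundamental p w r)"
    using assoc_norm_indicator_le[OF u \<open>0 < p\<close> Wpos m E(1)] by blast
  have "ennreal (assoc_fundamental p w r) \<le> assoc_norm p u w (indicator E)"
    using Wpos r by (intro assoc_norm_indicator_ge[OF u w \<open>0 < p\<close> _ E(1)]) auto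
  also have "\<dots> \<le> ennreal (layer_const p m) * assoc_norm p u w (indicator E)"
    using mult_right_mono[of 1 "ennreal (layer_const p m)" "assoc_norm p u w (indicator E)"]
      one_le_layer_const[OF \<open>0 < p\<close>, of m]
    by (simp add: ennreal_ge_1)
  finally show "ennreal (assoc_fundamental p w r) \<le> ennreal (layer_const p m) * assoc_norm p u w (indicator E)" .
qed

text \<open>
  The condition B_{p,oo}, raised to the p-th power and used only at levels y with
  (0,a] contained in {Pf > y}.
\<close>
locale B_p_infty_weight =
  fixes p :: real and w :: "real \<Rightarrow> real" and K :: real
  assumes p_gt_1: "1 < p"
    and weight: "weight_pos w"
    and K_pos: "0 < K"
    and level_bound: "\<And>f y a B. \<forall>t>0. 0 \<le> f t \<Longrightarrow> antimono_on {0<..} f \<Longrightarrow> 0 < y \<Longrightarrow> 0 < a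
      \<Longrightarrow> \<forall>t\<in>{0<..a}. ennreal y < hardyP f t \<Longrightarrow> 0 \<le> B
      \<Longrightarrow> (\<integral>\<^sup>+t\<in>{0<..}. ennreal (f t powr p * w t) \<partial>lebesgue) \<le> ennreal B
      \<Longrightarrow> y powr p * Wfun w a \<le> K * B"

lemma B_p_infty_weightI:
  assumes p: "1 < p" and w: "weight_pos w" and "B_p_infty p w"
  shows "\<exists>K. B_p_infty_weight p w K"
proof -
  obtain C0 where C0: "\<And>f y. \<forall>t>0. 0 \<le> f t \<Longrightarrow> antimono_on {0<..} f \<Longrightarrow> 0 < y \<Longrightarrow>
      ennreal y * enn_powr (\<integral>\<^sup>+ t\<in>{t. t > 0 \<and> hardyP f t > ennreal y}. ennreal (w t) \<partial>lebesgue) (1/p)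
        \<le> ennreal C0 * enn_powr (\<integral>\<^sup>+ t\<in>{0<..}. ennreal (f t powr p * w t) \<partial>lebesgue) (1/p)"
    using \<open>B_p_infty p w\<close> unfolding B_p_infty_def by blast
  define C where "C = max C0 1"
  have "0 < C"
    by (simp add: C_def)
  have "B_p_infty_weight p w (C powr p)"
  proof
    fix f y a B
    assume f: "\<forall>t>0. 0 \<le> f t" "antimono_on {0<..} f" and "0 < y" "0 < a"
      and level: "\<forall>t\<in>{0<..a}. ennreal y < hardyP f t" and "0 \<le> B"
      and integral: "(\<integral>\<^sup>+t\<in>{0<..}. ennreal (f t powr p * w t) \<partial>lebesgue) \<le> ennreal B"
    have p_inv: "0 < 1/p"
      using p by simp
    have "ennreal (Wfun w a) \<le> (\<integral>\<^sup>+ t\<in>{t. t > 0 \<and> hardyP f t > ennreal y}. ennreal (w t) \<partial>lebesgue)"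
      unfolding nn_integral_weight_Ioc[OF w \<open>0 < a\<close>, symmetric] using level
      by (intro nn_integral_mono) (auto simp: indicator_def)
    then have "ennreal y * enn_powr (ennreal (Wfun w a)) (1/p)
        \<le> ennreal y * enn_powr (\<integral>\<^sup>+ t\<in>{t. t > 0 \<and> hardyP f t > ennreal y}. ennreal (w t) \<partial>lebesgue) (1/p)"
      by (intro mult_left_mono enn_powr_mono p_inv) auto
    then have "ennreal (y * Wfun w a powr (1/p))
        \<le> ennreal y * enn_powr (\<integral>\<^sup>+ t\<in>{t. t > 0 \<and> hardyP f t > ennreal y}. ennreal (w t) \<partial>lebesgue) (1/p)"
      using Wfun_nonneg[OF w \<open>0 < a\<close>] \<open>0 < y\<close> by (simp add: enn_powr_ennreal ennreal_mult)
    also have "\<dots> \<le> ennreal C0 * enn_powr (\<integral>\<^sup>+ t\<in>{0<..}. ennreal (f t powr p * w t) \<partial>lebesgue) (1/p)"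
      using C0 f \<open>0 < y\<close> by blast
    also have "\<dots> \<le> ennreal C * enn_powr (ennreal B) (1/p)"
      by (intro mult_mono enn_powr_mono integral p_inv) (auto simp: C_def)
    also have "\<dots> = ennreal (C * B powr (1/p))"
      using \<open>0 \<le> B\<close> \<open>0 < C\<close> by (simp add: enn_powr_ennreal ennreal_mult)
    finally have "y * Wfun w a powr (1/p) \<le> C * B powr (1/p)"
      using \<open>0 < C\<close> \<open>0 \<le> B\<close> by (simp add: ennreal_le_iff)
    then have "(y * Wfun w a powr (1/p)) powr p \<le> (C * B powr (1/p)) powr p"
      using p \<open>0 < y\<close> by (intro powr_mono2) auto
    then show "y powr p * Wfun w a \<le> C powr p * B"
      using p \<open>0 < y\<close> \<open>0 < C\<close> \<open>0 \<le> B\<close> Wfun_nonneg[OF w \<open>0 < a\<close>]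
      by (simp add: powr_mult powr_powr)
  qed (use p w \<open>0 < C\<close> in auto)
  then show ?thesis ..
qed

context B_p_infty_weight
begin

lemma dyadic_test_level_bound:
  assumes "0 < s" "2^m * s \<le> a"
  shows "((real m + 1) / (2 * a)) powr p * Wfun w a
      \<le> K * (2 powr p * (\<Sum>k\<le>m. Wfun w (2^k * s) * (2^k * s) powr -p))"
proof (rule level_bound[where f = "dyadic_test s m"])
  have "0 < (2::real)^m * s"
    using assms by simp
  then show "0 < a"
    using assms by linarith
  then show "0 < (real m + 1) / (2 * a)"
    by simp
  show "\<forall>t\<in>{0<..a}. ennreal ((real m + 1) / (2 * a)) < hardyP (dyadic_test s m) t"
  proof
    fix t assume t: "t \<in> {0<..a}"
    have "max t (2^j * s) \<le> a" if "j \<le> m" for j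
    proof -
      have "(2::real)^j * s \<le> 2^m * s"
        using that \<open>0 < s\<close> by (intro mult_right_mono power_increasing) auto
      with assms(2) have "2^j * s \<le> a"
        by linarith
      with t show ?thesis
        by simp
    qed
    then have "(\<Sum>j\<le>m. 1 / a) \<le> (\<Sum>j\<le>m. 1 / max t (2^j * s))"
      using t \<open>0 < s\<close> by (intro sum_mono divide_left_mono) auto
    moreover have "(real m + 1) / (2 * a) < (\<Sum>j\<le>m. 1 / a)"
      using \<open>0 < a\<close> by (simp add: field_simps add_pos_nonneg)
    ultimately show "ennreal ((real m + 1) / (2 * a)) < hardyP (dyadic_test s m) t"
      using t \<open>0 < s\<close> \<open>0 < a\<close> by (simp add: hardyP_dyadic_test ennreal_less_iff)
  qed
  show "0 \<le> 2 powr p * (\<Sum>k\<le>m. Wfun w (2^k * s) * (2^k * s) powr -p)"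
    using Wfun_nonneg[OF weight] \<open>0 < s\<close> by (intro mult_nonneg_nonneg sum_nonneg) auto
  show "\<forall>t>0. 0 \<le> dyadic_test s m t"
    using \<open>0 < s\<close> by (simp add: dyadic_test_nonneg)
  show "antimono_on {0<..} (dyadic_test s m)"
    using \<open>0 < s\<close> by (rule dyadic_test_antimono)
  show "(\<integral>\<^sup>+t\<in>{0<..}. ennreal (dyadic_test s m t powr p * w t) \<partial>lebesgue)
      \<le> ennreal (2 powr p * (\<Sum>k\<le>m. Wfun w (2^k * s) * (2^k * s) powr -p))"
    using p_gt_1 by (intro nn_integral_dyadic_test_powr_le[OF weight \<open>0 < s\<close>]) simp
qed

lemma Wfun_doubling:
  assumes "0 < b" "b \<le> a"
  shows "Wfun w a * a powr -p \<le> 4 powr p * K * (Wfun w b * b powr -p)"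
proof -
  have "Wfun w a * a powr -p = 2 powr p * ((1 / (2 * a)) powr p * Wfun w a)"
    using assms by (simp add: powr_divide powr_mult powr_minus_divide)
  also have "\<dots> \<le> 2 powr p * (K * (2 powr p * (Wfun w b * b powr -p)))"
    using dyadic_test_level_bound[of b 0 a] assms by (intro mult_left_mono) simp_all
  also have "\<dots> = (2 powr p * 2 powr p) * K * (Wfun w b * b powr -p)"
    by (simp only: mult_ac)
  also have "(2::real) powr p * 2 powr p = 4 powr p"
    by (simp add: powr_mult[symmetric])
  finally show ?thesis .
qed

lemma Wfun_vanishes_or_pos: "(\<forall>t\<ge>0. Wfun w t = 0) \<or> (\<forall>t>0. 0 < Wfun w t)"
proof (rule disjCI)
  assume "\<not> (\<forall>t>0. 0 < Wfun w t)"
  then obtain b where "0 < b" "\<not> 0 < Wfun w b"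
    by auto
  then have "Wfun w b = 0"
    using Wfun_nonneg[OF weight \<open>0 < b\<close>] by linarith
  have "Wfun w a = 0" if "0 < a" for a
  proof (cases "a \<le> b")
    case True
    then show ?thesis
      using Wfun_mono[OF weight \<open>0 < a\<close> True] Wfun_nonneg[OF weight \<open>0 < a\<close>] \<open>Wfun w b = 0\<close>
      by simp
  next
    case False
    then show ?thesis
      using Wfun_doubling[OF \<open>0 < b\<close>, of a] Wfun_nonneg[OF weight \<open>0 < a\<close>] \<open>Wfun w b = 0\<close> \<open>0 < a\<close>
      by (simp add: mult_le_0_iff)
  qed
  moreover have "Wfun w 0 = 0"
    by (simp add: Wfun_def set_lebesgue_integral_def)
  ultimately show "\<forall>t\<ge>0. Wfun w t = 0"
    by (metis less_eq_real_def)
qed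

text \<open>
  On (0, 2^m s] the Hardy average of dyadic_test s m is at least (m + 1) / 2^m s, whereas,
  unless W(t) / t^p halves, its L^p(w) norm grows only like (m + 1)^(1/p).
\<close>
lemma Wfun_decay_of_large_index:
  assumes m: "2 * 16 powr p * K^2 < (real m + 1) powr (p - 1)" and "0 < s"
  shows "Wfun w (2^m * s) * (2^m * s) powr -p \<le> 1/2 * (Wfun w s * s powr -p)"
proof (rule ccontr)
  define r where "r = 2^m * s"
  define D where "D t = Wfun w t * t powr -p" for t
  define M where "M = real m + 1"
  assume "\<not> ?thesis"
  then have less: "D s < 2 * D r"
    unfolding D_def r_def by simp
  have "0 < r" "0 < M"
    using \<open>0 < s\<close> by (simp_all add: r_def M_def)
  have "0 \<le> D s"
    unfolding D_def using Wfun_nonneg[OF weight \<open>0 < s\<close>] by simp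
  with less have "0 < D r"
    by linarith
  have doubled: "D (2^k * s) \<le> 4 powr p * K * D s" for k
    unfolding D_def using \<open>0 < s\<close> by (intro Wfun_doubling) auto
  have "(M / (2 * r)) powr p * Wfun w r \<le> K * (2 powr p * (\<Sum>k\<le>m. D (2^k * s)))"
    using dyadic_test_level_bound[of s m r] \<open>0 < s\<close> by (simp add: r_def M_def D_def)
  also have "\<dots> \<le> K * (2 powr p * (M * (4 powr p * K * D s)))"
    using sum_bounded_above[of "{..m}" "\<lambda>k. D (2^k * s)" "4 powr p * K * D s", OF doubled] K_pos
    by (intro mult_left_mono) (auto simp: M_def add.commute)
  also have "\<dots> < K * (2 powr p * (M * (4 powr p * K * (2 * D r))))"
    using less \<open>0 < M\<close> K_pos by (intro mult_strict_left_mono) auto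
  finally have "M powr p * 2 powr -p * D r < (2 * 8 powr p * K^2 * M) * D r"
    using \<open>0 < r\<close> \<open>0 < M\<close>
    by (simp add: D_def powr_divide powr_mult powr_minus_divide power2_eq_square mult_ac
        flip: powr_mult[of 2 4, simplified])
  then have "M * M powr (p - 1) * 2 powr -p < 2 * 8 powr p * K^2 * M"
    using \<open>0 < D r\<close> \<open>0 < M\<close> by (simp add: powr_diff)
  then have "M powr (p - 1) < 2 * 16 powr p * K^2"
    using \<open>0 < M\<close> by (simp add: powr_minus_divide field_simps flip: powr_mult[of 2 8, simplified])
  with m show False
    unfolding M_def by simp
qed

lemma exists_dilation_index:
  assumes Wpos: "\<forall>t>0. 0 < Wfun w t"
  shows "\<exists>m. dilation_index p w m"
proof -
  obtain m where "1 \<le> m" and m: "2 * 16 powr p * K^2 < (real m + 1) powr (p - 1)"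
    using exists_nat_powr_gt p_gt_1 by (metis diff_gt_0_iff_gt)
  define D where "D t = Wfun w t * t powr -p" for t
  have D_pos: "0 < D t" if "0 < t" for t
    unfolding D_def using Wpos that by simp
  have F_eq: "assoc_fundamental p w t = D t powr (-1/p)" if "0 < t" for t
  proof -
    have "D t powr (-1/p) = Wfun w t powr -(1/p) * (t powr -p) powr -(1/p)"
      unfolding D_def using Wpos that by (simp add: powr_mult)
    also have "(t powr -p) powr -(1/p) = t"
      using that p_gt_1 by (simp add: powr_powr)
    finally show ?thesis
      unfolding assoc_fundamental_def by (simp add: powr_minus_divide)
  qed
  have "2 powr (1/p) * assoc_fundamental p w s \<le> assoc_fundamental p w (2^m * s)" if "0 < s" for s
  proof -
    have "D (2^m * s) \<le> 1/2 * D s"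
      unfolding D_def using Wfun_decay_of_large_index[OF m that] .
    then have "(1/2 * D s) powr (-1/p) \<le> D (2^m * s) powr (-1/p)"
      using D_pos p_gt_1 that by (intro powr_mono2') auto
    moreover have "(1/2 * D s) powr (-1/p) = 2 powr (1/p) * D s powr (-1/p)"
      using D_pos[OF that] by (simp add: powr_mult powr_minus_divide powr_divide)
    ultimately show ?thesis
      using that by (simp add: F_eq)
  qed
  with \<open>1 \<le> m\<close> show ?thesis
    unfolding dilation_index_def by blast
qed

end

theorem proposition2p6:
  fixes p :: real and u w :: "real \<Rightarrow> real"
  assumes "1 < p"
    and "weight_R u"
    and "weight_pos w"
    and "B_p_infty p w"
  shows "\<exists>C>0. \<forall>E \<in> sets lebesgue. 0 < umeas u E \<and> umeas u E < top \<longrightarrow>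
           (let uE = enn2real (umeas u E); R = uE / (Wfun w uE powr (1/p)) in
              assoc_norm p u w (indicator E) \<le> ennreal (C * R)
            \<and> ennreal R \<le> ennreal C * assoc_norm p u w (indicator E))"
proof -
  obtain K where "B_p_infty_weight p w K"
    using B_p_infty_weightI assms(1,3,4) by blast
  then interpret B_p_infty_weight p w K .
  consider (positive) "\<forall>t>0. 0 < Wfun w t" | (vanishing) "\<forall>t\<ge>0. Wfun w t = 0"
    using Wfun_vanishes_or_pos by blast
  then show ?thesis
  proof cases
    case positive
    then obtain m where m: "dilation_index p w m"
      using exists_dilation_index by blast
    have "0 < layer_const p m"
      using one_le_layer_const[of p m] \<open>1 < p\<close> by simp
    with assoc_norm_indicator_approx[OF assms(2,3) _ positive m] \<open>1 < p\<close> show ?thesis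
      by (intro exI[of _ "layer_const p m"]) (auto simp: Let_def assoc_fundamental_def)
  next
    case vanishing
    \<comment> \<open>then R = uE / 0 = 0\<close>
    then show ?thesis
      by (intro exI[of _ 1]) (simp add: assoc_norm_eq_0 Let_def)
  qed
qed

end
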